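(* Let $m\ge1$ and $x_{i,j}\in[-1,1]$ for $i\in[m]$, $j\in[m+1]$. Then for any $a\in\mathbb{R}^m$ there exists a subset $S\subseteq[m+1]$ with $|S|\le m$ such that \[\Big|\sum_{i=1}^m a_i\prod_{j\in S}x_{i,j}\Big|\ge\frac{1}{2^m-1}\Big|\sum_{i=1}^m a_i\prod_{j=1}^{m+1}x_{i,j}\Big|.\]
   Context: An empty product equals $1$. *)

theory Defs
  imports Main Complex_Main
begin

end

theory Submission
  imports Defs
begin

text \<open>
  Put \<open>M = {1..m}\<close>. For every row \<open>i \<in> M\<close> the product \<open>\<Prod>j\<in>M. x i j - x j j\<close> vanishes,
  because its factor \<open>j = i\<close> is zero. Expanding these products over the subsets \<open>T \<subseteq> M\<close> and
  combining the rows with weights \<open>a i * x i (m+1)\<close> writes the full sum as a combination,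
  with coefficients of modulus at most \<open>1\<close>, of the \<open>2^m - 1\<close> sums over
  \<open>S = insert (m+1) T\<close> with \<open>T \<subset> M\<close>. One of these is at least the average.
\<close>

lemma sum_Pow_prod_diff_combination_eq_0:
  fixes x :: "'i \<Rightarrow> 'a \<Rightarrow> 'b::comm_ring_1"
  assumes "finite M" and "\<And>i. i \<in> I \<Longrightarrow> \<exists>j\<in>M. x i j = z j"
  shows "(\<Sum>T\<in>Pow M. (\<Prod>j\<in>M - T. - z j) * (\<Sum>i\<in>I. b i * (\<Prod>j\<in>T. x i j))) = 0"
proof -
  have row_eq_0: "(\<Sum>T\<in>Pow M. (\<Prod>j\<in>T. x i j) * (\<Prod>j\<in>M - T. - z j)) = 0" if i: "i \<in> I" for i
  proof -
    obtain k where "k \<in> M" and "x i k = z k"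
      using assms(2)[OF i] by blast
    then have "(\<Prod>j\<in>M. x i j + - z j) = 0"
      using assms(1) by (intro prod_zero) auto
    then show ?thesis
      using prod_add[OF assms(1), of "x i" "\<lambda>j. - z j"] by simp
  qed
  have "(\<Sum>T\<in>Pow M. (\<Prod>j\<in>M - T. - z j) * (\<Sum>i\<in>I. b i * (\<Prod>j\<in>T. x i j)))
      = (\<Sum>T\<in>Pow M. \<Sum>i\<in>I. b i * ((\<Prod>j\<in>T. x i j) * (\<Prod>j\<in>M - T. - z j)))"
    by (simp add: sum_distrib_left ac_simps)
  also have "\<dots> = (\<Sum>i\<in>I. \<Sum>T\<in>Pow M. b i * ((\<Prod>j\<in>T. x i j) * (\<Prod>j\<in>M - T. - z j)))"
    by (rule sum.swap)
  also have "\<dots> = (\<Sum>i\<in>I. b i * (\<Sum>T\<in>Pow M. (\<Prod>j\<in>T. x i j) * (\<Prod>j\<in>M - T. - z j)))"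
    by (simp add: sum_distrib_left)
  also have "\<dots> = 0"
    by (simp add: row_eq_0)
  finally show ?thesis .
qed

lemma abs_sum_prod_le_sum_proper_subsets:
  fixes x :: "'i \<Rightarrow> 'a \<Rightarrow> 'b::linordered_field"
  assumes "finite M" and "\<And>i. i \<in> I \<Longrightarrow> \<exists>j\<in>M. x i j = z j"
    and "\<And>j. j \<in> M \<Longrightarrow> \<bar>z j\<bar> \<le> 1"
  shows "\<bar>\<Sum>i\<in>I. b i * (\<Prod>j\<in>M. x i j)\<bar>
    \<le> (\<Sum>T\<in>Pow M - {M}. \<bar>\<Sum>i\<in>I. b i * (\<Prod>j\<in>T. x i j)\<bar>)"
proof -
  define g where "g T = (\<Sum>i\<in>I. b i * (\<Prod>j\<in>T. x i j))" for T
  define c where "c T = (\<Prod>j\<in>M - T. - z j)" for T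
  have "(\<Sum>T\<in>Pow M. c T * g T) = 0"
    unfolding c_def g_def by (rule sum_Pow_prod_diff_combination_eq_0[OF assms(1,2)])
  moreover have "(\<Sum>T\<in>Pow M. c T * g T) = c M * g M + (\<Sum>T\<in>Pow M - {M}. c T * g T)"
    using assms(1) by (subst sum.remove[of _ M]) auto
  ultimately have g_M: "g M = - (\<Sum>T\<in>Pow M - {M}. c T * g T)"
    by (simp add: c_def)
  have abs_c_le_1: "\<bar>c T\<bar> \<le> 1" for T
    unfolding c_def abs_prod by (rule prod_le_1) (simp_all add: assms(3))
  have "\<bar>g M\<bar> \<le> (\<Sum>T\<in>Pow M - {M}. \<bar>c T * g T\<bar>)"
    unfolding g_M abs_minus_cancel by (rule sum_abs)
  also have "\<dots> \<le> (\<Sum>T\<in>Pow M - {M}. \<bar>g T\<bar>)"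
    by (rule sum_mono) (simp add: abs_mult abs_c_le_1 mult_left_le_one_le)
  finally show ?thesis
    by (simp add: g_def)
qed

lemma exists_ge_average:
  fixes f :: "'a \<Rightarrow> 'b::linordered_semidom"
  assumes "finite A" and "A \<noteq> {}"
  shows "\<exists>y\<in>A. sum f A \<le> of_nat (card A) * f y"
proof -
  have "Max (f ` A) \<in> f ` A"
    using assms by (intro Max_in) auto
  then obtain y where "y \<in> A" and "f y = Max (f ` A)"
    by (metis imageE)
  then show ?thesis
    using assms by (auto intro!: bexI[of _ y] sum_bounded_above)
qed

lemma exists_proper_subset_abs_sum_prod_ge:
  fixes x :: "'i \<Rightarrow> 'a \<Rightarrow> 'b::linordered_field"
  assumes "finite M" and "M \<noteq> {}" and "\<And>i. i \<in> I \<Longrightarrow> \<exists>j\<in>M. x i j = z j"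
    and "\<And>j. j \<in> M \<Longrightarrow> \<bar>z j\<bar> \<le> 1"
  shows "\<exists>T\<subset>M. \<bar>\<Sum>i\<in>I. b i * (\<Prod>j\<in>M. x i j)\<bar>
    \<le> (2 ^ card M - 1) * \<bar>\<Sum>i\<in>I. b i * (\<Prod>j\<in>T. x i j)\<bar>"
proof -
  define g where "g T = (\<Sum>i\<in>I. b i * (\<Prod>j\<in>T. x i j))" for T
  have "finite (Pow M - {M})" and "Pow M - {M} \<noteq> {}"
    using assms(1,2) by auto
  from exists_ge_average[OF this, of "\<lambda>T. \<bar>g T\<bar>"]
  obtain T where "T \<subset> M"
    and average: "(\<Sum>T\<in>Pow M - {M}. \<bar>g T\<bar>) \<le> of_nat (card (Pow M - {M})) * \<bar>g T\<bar>"
    by blast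
  have "\<bar>g M\<bar> \<le> (\<Sum>T\<in>Pow M - {M}. \<bar>g T\<bar>)"
    unfolding g_def by (rule abs_sum_prod_le_sum_proper_subsets[OF assms(1,3,4)])
  also have "\<dots> \<le> of_nat (card (Pow M - {M})) * \<bar>g T\<bar>"
    by (rule average)
  also have "of_nat (card (Pow M - {M})) = (2::'b) ^ card M - 1"
    using assms(1) by (simp add: card_Pow of_nat_diff)
  finally show ?thesis
    using \<open>T \<subset> M\<close> unfolding g_def by blast
qed

theorem lemma8:
  fixes m :: nat and x :: "nat \<Rightarrow> nat \<Rightarrow> real" and a :: "nat \<Rightarrow> real"
  assumes "m \<ge> 1"
    and "\<And>i j. i \<in> {1..m} \<Longrightarrow> j \<in> {1..m+1} \<Longrightarrow> \<bar>x i j\<bar> \<le> 1"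
  shows "\<exists>S. S \<subseteq> {1..m+1} \<and> card S \<le> m \<and>
    \<bar>\<Sum>i=1..m. a i * (\<Prod>j\<in>S. x i j)\<bar> \<ge>
      (1 / (2 ^ m - 1)) * \<bar>\<Sum>i=1..m. a i * (\<Prod>j=1..m+1. x i j)\<bar>"
proof -
  define M where "M = {1..m}"
  define g where "g T = (\<Sum>i=1..m. a i * (\<Prod>j\<in>insert (m+1) T. x i j))" for T
  have g_eq: "g T = (\<Sum>i\<in>M. (a i * x i (m+1)) * (\<Prod>j\<in>T. x i j))" if "T \<subseteq> M" for T
  proof -
    have "m + 1 \<notin> T" and "finite T"
      using that finite_subset[OF that] by (auto simp: M_def)
    then show ?thesis
      by (simp add: g_def M_def mult.assoc)
  qed
  have "\<exists>j\<in>M. x i j = x j j" if "i \<in> M" for i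
    using that by blast
  moreover have "\<bar>x j j\<bar> \<le> 1" if "j \<in> M" for j
    using that assms(2) by (simp add: M_def)
  ultimately obtain T where T: "T \<subset> M" and "\<bar>g M\<bar> \<le> (2 ^ m - 1) * \<bar>g T\<bar>"
    using exists_proper_subset_abs_sum_prod_ge[of M M x "\<lambda>j. x j j" "\<lambda>i. a i * x i (m+1)"]
      assms(1) by (auto simp: g_eq M_def)
  moreover have "(2::real) ^ m > 1"
    using assms(1) by simp
  moreover have "g M = (\<Sum>i=1..m. a i * (\<Prod>j=1..m+1. x i j))"
    by (simp add: g_def M_def atLeastAtMostSuc_conv)
  moreover have "card (insert (m+1) T) \<le> m"
    using T psubset_card_mono[of M T] by (intro card_insert_le_m1) (auto simp: M_def)
  moreover have "insert (m+1) T \<subseteq> {1..m+1}"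
    using T by (auto simp: M_def)
  ultimately show ?thesis
    by (intro exI[of _ "insert (m+1) T"]) (simp add: g_def divide_le_eq mult.commute)
qed

end
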